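(* Let $V$ be a finite-dimensional real vector space with a linear action of the quaternion algebra $\mathbb H$, and $\Lambda\subset V$ a lattice of maximal rank. Then for all complex structures $L\in\mathbb H$ (i.e. $L^2=-1$) except for at most countably many, the following holds: every rational $L$-invariant subspace $W\subset V$ is $\mathbb H$-invariant.
   Context: A real subspace $W\subset V$ is rational if $\Lambda\cap W$ is a lattice of maximal rank in $W$. The elements $L\in\mathbb H$ with $L^2=-1$ are $L=aI+bJ+cK$ with $a^2+b^2+c^2=1$. *)

theory Defs
  imports "HOL-Analysis.Analysis"
begin

definition full_lattice :: "'v::euclidean_space set \<Rightarrow> 'v set \<Rightarrow> bool" where
  "full_lattice W \<Gamma> \<longleftrightarrow>
     (\<exists>B. finite B \<and> independent B \<and> span B = W \<and>
          \<Gamma> = {(\<Sum>b\<in>B. c b *\<^sub>R b) | c. \<forall>b\<in>B. c b \<in> \<int>})"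

definition rational_subspace :: "'v::euclidean_space set \<Rightarrow> 'v set \<Rightarrow> bool" where
  "rational_subspace \<Lambda> W \<longleftrightarrow> subspace W \<and> full_lattice W (\<Lambda> \<inter> W)"

text \<open>A linear action of the quaternions on V, given by the images I, J, K of
  the standard units, subject to Hamilton's relations.\<close>
definition quaternion_action :: "('v::euclidean_space \<Rightarrow> 'v) \<Rightarrow> ('v \<Rightarrow> 'v) \<Rightarrow> ('v \<Rightarrow> 'v) \<Rightarrow> bool" where
  "quaternion_action I J K \<longleftrightarrow> linear I \<and> linear J \<and> linear K \<and>
     (\<forall>v. I (I v) = - v) \<and> (\<forall>v. J (J v) = - v) \<and> (\<forall>v. K (K v) = - v) \<and>
     (\<forall>v. I (J (K v)) = - v)"

end

theory Submission
  imports Defs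
begin

text \<open>A rational subspace is the span of finitely many lattice vectors, and the lattice is
  countable, so there are only countably many rational subspaces. If a subspace W is invariant
  under two imaginary unit quaternions u and v with v \<noteq> \<plusminus>u, then it is also invariant under
  their commutator uv - vu = 2 (u \<times> v); as u, v and u \<times> v span the imaginary quaternions,
  W is then invariant under I, J and K. Hence a rational subspace that is not
  \<bbbH>-invariant is invariant under at most the two complex structures \<plusminus>u, and the
  exceptional set is a countable union of finite sets.\<close>

definition imag_quat_op ::
    "('v::real_vector \<Rightarrow> 'v) \<Rightarrow> ('v \<Rightarrow> 'v) \<Rightarrow> ('v \<Rightarrow> 'v) \<Rightarrow> real \<Rightarrow> real \<Rightarrow> real \<Rightarrow> 'v \<Rightarrow> 'v"
  where "imag_quat_op I J K a b c v = a *\<^sub>R I v + b *\<^sub>R J v + c *\<^sub>R K v"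

definition invariant_imag_units ::
    "('v::real_vector \<Rightarrow> 'v) \<Rightarrow> ('v \<Rightarrow> 'v) \<Rightarrow> ('v \<Rightarrow> 'v) \<Rightarrow> 'v set \<Rightarrow> (real \<times> real \<times> real) set"
  where "invariant_imag_units I J K W =
    {(a, b, c). a\<^sup>2 + b\<^sup>2 + c\<^sup>2 = 1 \<and> imag_quat_op I J K a b c ` W \<subseteq> W}"

lemma quaternion_action_mult_table:
  assumes "quaternion_action I J K"
  shows "I (J x) = K x" "J (K x) = I x" "K (I x) = J x"
    and "J (I x) = - K x" "K (J x) = - I x" "I (K x) = - J x"
    and "I (I x) = - x" "J (J x) = - x" "K (K x) = - x"
proof -
  have lin: "linear I" "linear J" "linear K"
    and sq: "\<And>v. I (I v) = - v" "\<And>v. J (J v) = - v" "\<And>v. K (K v) = - v"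
    and IJK: "\<And>v. I (J (K v)) = - v"
    using assms unfolding quaternion_action_def by auto
  have neg: "\<And>v. I (- v) = - I v" "\<And>v. J (- v) = - J v" "\<And>v. K (- v) = - K v"
    using lin by (simp_all add: linear_neg)
  have IJ: "I (J v) = K v" for v
    using IJK[of "K v"] by (simp add: sq neg)
  have JK: "J (K v) = I v" for v
    using arg_cong[OF IJK[of v], of I] by (simp add: sq neg)
  have IK: "I (K v) = - J v" for v
    using sq(1)[of "J v"] by (simp add: IJ)
  have JI: "J (I v) = - K v" for v
    using sq(2)[of "K v"] by (simp add: JK)
  have KI: "K (I v) = J v" for v
    using IJ[of "I v"] by (simp add: JI IK neg)
  have KJ: "K (J v) = - I v" for v
    using sq(3)[of "I v"] by (simp add: KI)
  show "I (J x) = K x" "J (K x) = I x" "K (I x) = J x"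
    and "J (I x) = - K x" "K (J x) = - I x" "I (K x) = - J x"
    and "I (I x) = - x" "J (J x) = - x" "K (K x) = - x"
    by (fact IJ JK KI JI KJ IK sq)+
qed

lemma imag_quat_op_commutator:
  assumes "quaternion_action I J K"
  shows "imag_quat_op I J K a b c (imag_quat_op I J K d e f x)
           - imag_quat_op I J K d e f (imag_quat_op I J K a b c x)
         = 2 *\<^sub>R imag_quat_op I J K (b * f - c * e) (c * d - a * f) (a * e - b * d) x"
proof -
  have lin: "linear I" "linear J" "linear K"
    using assms unfolding quaternion_action_def by auto
  show ?thesis
    \<comment> \<open>writing \<open>2 *\<^sub>R y\<close> as \<open>y + y\<close> puts both sides into the same \<open>algebra_simps\<close> normal form\<close>
    unfolding imag_quat_op_def scaleR_2
    by (simp add: linear_add[OF lin(1)] linear_add[OF lin(2)] linear_add[OF lin(3)]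
        linear_scale[OF lin(1)] linear_scale[OF lin(2)] linear_scale[OF lin(3)]
        quaternion_action_mult_table[OF assms] algebra_simps)
qed

text \<open>Cramer's rule, with the adjugate rows as coefficients.\<close>
lemma subspace_if_invertible_combinations:
  fixes X Y Z :: "'a::real_vector"
  assumes W: "subspace W"
    and "u1 *\<^sub>R X + u2 *\<^sub>R Y + u3 *\<^sub>R Z \<in> W"
    and "v1 *\<^sub>R X + v2 *\<^sub>R Y + v3 *\<^sub>R Z \<in> W"
    and "w1 *\<^sub>R X + w2 *\<^sub>R Y + w3 *\<^sub>R Z \<in> W"
    and "u1 * (v2 * w3 - v3 * w2) + u2 * (v3 * w1 - v1 * w3) + u3 * (v1 * w2 - v2 * w1) \<noteq> 0"
  shows "X \<in> W \<and> Y \<in> W \<and> Z \<in> W"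
proof -
  have first_in_W: "X \<in> W"
    if U: "u1 *\<^sub>R X + u2 *\<^sub>R Y + u3 *\<^sub>R Z \<in> W"
      and V: "v1 *\<^sub>R X + v2 *\<^sub>R Y + v3 *\<^sub>R Z \<in> W"
      and Ww: "w1 *\<^sub>R X + w2 *\<^sub>R Y + w3 *\<^sub>R Z \<in> W"
      and det: "u1 * (v2 * w3 - v3 * w2) + u2 * (v3 * w1 - v1 * w3) + u3 * (v1 * w2 - v2 * w1) \<noteq> 0"
    for X Y Z :: 'a and u1 u2 u3 v1 v2 v3 w1 w2 w3 :: real
  proof -
    define D where "D = u1 * (v2 * w3 - v3 * w2) + u2 * (v3 * w1 - v1 * w3) + u3 * (v1 * w2 - v2 * w1)"
    have "(v2 * w3 - v3 * w2) *\<^sub>R (u1 *\<^sub>R X + u2 *\<^sub>R Y + u3 *\<^sub>R Z)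
          + (w2 * u3 - w3 * u2) *\<^sub>R (v1 *\<^sub>R X + v2 *\<^sub>R Y + v3 *\<^sub>R Z)
          + (u2 * v3 - u3 * v2) *\<^sub>R (w1 *\<^sub>R X + w2 *\<^sub>R Y + w3 *\<^sub>R Z) \<in> W"
      using W U V Ww by (simp add: subspace_add subspace_mul)
    also have "(v2 * w3 - v3 * w2) *\<^sub>R (u1 *\<^sub>R X + u2 *\<^sub>R Y + u3 *\<^sub>R Z)
          + (w2 * u3 - w3 * u2) *\<^sub>R (v1 *\<^sub>R X + v2 *\<^sub>R Y + v3 *\<^sub>R Z)
          + (u2 * v3 - u3 * v2) *\<^sub>R (w1 *\<^sub>R X + w2 *\<^sub>R Y + w3 *\<^sub>R Z) = D *\<^sub>R X"
      unfolding D_def by (simp add: algebra_simps)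
    finally have "inverse D *\<^sub>R (D *\<^sub>R X) \<in> W"
      using W by (rule subspace_mul[rotated])
    then show "X \<in> W"
      using det unfolding D_def by simp
  qed
  have "X \<in> W"
    by (rule first_in_W[OF assms(2-5)])
  moreover have "Y \<in> W"
    by (rule first_in_W[of u2 Y u3 Z u1 X v2 v3 v1 w2 w3 w1])
      (use assms(2-5) in \<open>simp_all add: algebra_simps\<close>)
  moreover have "Z \<in> W"
    by (rule first_in_W[of u3 Z u1 X u2 Y v3 v1 v2 w3 w1 w2])
      (use assms(2-5) in \<open>simp_all add: algebra_simps\<close>)
  ultimately show ?thesis
    by blast
qed

lemma unit_vectors_cross_eq_0:
  fixes u1 u2 u3 v1 v2 v3 :: real
  assumes u: "u1\<^sup>2 + u2\<^sup>2 + u3\<^sup>2 = 1" and v: "v1\<^sup>2 + v2\<^sup>2 + v3\<^sup>2 = 1"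
    and cross: "u2 * v3 - u3 * v2 = 0" "u3 * v1 - u1 * v3 = 0" "u1 * v2 - u2 * v1 = 0"
  shows "(v1, v2, v3) \<in> {(u1, u2, u3), (-u1, -u2, -u3)}"
proof -
  define s where "s = u1 * v1 + u2 * v2 + u3 * v3"
  have "s\<^sup>2 = (u1\<^sup>2 + u2\<^sup>2 + u3\<^sup>2) * (v1\<^sup>2 + v2\<^sup>2 + v3\<^sup>2)
              - ((u2 * v3 - u3 * v2)\<^sup>2 + (u3 * v1 - u1 * v3)\<^sup>2 + (u1 * v2 - u2 * v1)\<^sup>2)"
    unfolding s_def by algebra
  then have s2: "s\<^sup>2 = 1"
    using u v cross by simp
  have "(v1 - s * u1)\<^sup>2 + (v2 - s * u2)\<^sup>2 + (v3 - s * u3)\<^sup>2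
      = (v1\<^sup>2 + v2\<^sup>2 + v3\<^sup>2) - 2 * s * s + s\<^sup>2 * (u1\<^sup>2 + u2\<^sup>2 + u3\<^sup>2)"
    unfolding s_def by algebra
  then have "(v1 - s * u1)\<^sup>2 + (v2 - s * u2)\<^sup>2 + (v3 - s * u3)\<^sup>2 = 0"
    using u v s2 by (simp add: power2_eq_square)
  then have "v1 = s * u1" "v2 = s * u2" "v3 = s * u3"
    by (simp_all add: add_nonneg_eq_0_iff)
  moreover have "s = 1 \<or> s = -1"
    using s2 by (simp add: power2_eq_1_iff)
  ultimately show ?thesis
    by auto
qed

lemma quaternion_invariant_if_two_imag_units_invariant:
  assumes qa: "quaternion_action I J K" and W: "subspace W"
    and u: "u1\<^sup>2 + u2\<^sup>2 + u3\<^sup>2 = 1" and v: "v1\<^sup>2 + v2\<^sup>2 + v3\<^sup>2 = 1"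
    and uv: "(v1, v2, v3) \<notin> {(u1, u2, u3), (-u1, -u2, -u3)}"
    and Wu: "imag_quat_op I J K u1 u2 u3 ` W \<subseteq> W"
    and Wv: "imag_quat_op I J K v1 v2 v3 ` W \<subseteq> W"
  shows "I ` W \<subseteq> W \<and> J ` W \<subseteq> W \<and> K ` W \<subseteq> W"
proof -
  define w1 where "w1 = u2 * v3 - u3 * v2"
  define w2 where "w2 = u3 * v1 - u1 * v3"
  define w3 where "w3 = u1 * v2 - u2 * v1"
  have Ww: "imag_quat_op I J K w1 w2 w3 x \<in> W" if x: "x \<in> W" for x
  proof -
    have "2 *\<^sub>R imag_quat_op I J K w1 w2 w3 x \<in> W"
      using imag_quat_op_commutator[OF qa, of u1 u2 u3 v1 v2 v3 x] W Wu Wv x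
      unfolding w1_def w2_def w3_def by (metis image_subset_iff subspace_diff)
    then have "(1/2) *\<^sub>R (2 *\<^sub>R imag_quat_op I J K w1 w2 w3 x) \<in> W"
      using W by (rule subspace_mul[rotated])
    then show ?thesis
      by simp
  qed
  have "w1\<^sup>2 + w2\<^sup>2 + w3\<^sup>2 \<noteq> 0"
    using unit_vectors_cross_eq_0[OF u v] uv unfolding w1_def w2_def w3_def
    by (auto simp: add_nonneg_eq_0_iff)
  moreover have "u1 * (v2 * w3 - v3 * w2) + u2 * (v3 * w1 - v1 * w3) + u3 * (v1 * w2 - v2 * w1)
      = w1\<^sup>2 + w2\<^sup>2 + w3\<^sup>2"
    unfolding w1_def w2_def w3_def by algebra
  ultimately have det: "u1 * (v2 * w3 - v3 * w2) + u2 * (v3 * w1 - v1 * w3) + u3 * (v1 * w2 - v2 * w1) \<noteq> 0"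
    by simp
  have "I x \<in> W \<and> J x \<in> W \<and> K x \<in> W" if x: "x \<in> W" for x
  proof -
    have "imag_quat_op I J K u1 u2 u3 x \<in> W" "imag_quat_op I J K v1 v2 v3 x \<in> W"
        "imag_quat_op I J K w1 w2 w3 x \<in> W"
      using Wu Wv Ww x by auto
    then show ?thesis
      unfolding imag_quat_op_def by (rule subspace_if_invertible_combinations[OF W _ _ _ det])
  qed
  then show ?thesis
    by blast
qed

lemma finite_invariant_imag_units:
  assumes qa: "quaternion_action I J K" and W: "subspace W"
    and not_quaternionic: "\<not> (I ` W \<subseteq> W \<and> J ` W \<subseteq> W \<and> K ` W \<subseteq> W)"
  shows "finite (invariant_imag_units I J K W)"
proof (cases "invariant_imag_units I J K W = {}")
  case True
  then show ?thesis
    by (metis finite.emptyI)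
next
  case False
  then obtain u1 u2 u3
    where u: "u1\<^sup>2 + u2\<^sup>2 + u3\<^sup>2 = 1" "imag_quat_op I J K u1 u2 u3 ` W \<subseteq> W"
    by (auto simp: invariant_imag_units_def)
  have "(v1, v2, v3) \<in> {(u1, u2, u3), (-u1, -u2, -u3)}"
    if v: "(v1, v2, v3) \<in> invariant_imag_units I J K W" for v1 v2 v3
  proof (rule ccontr)
    assume uv: "(v1, v2, v3) \<notin> {(u1, u2, u3), (-u1, -u2, -u3)}"
    from v have "v1\<^sup>2 + v2\<^sup>2 + v3\<^sup>2 = 1" "imag_quat_op I J K v1 v2 v3 ` W \<subseteq> W"
      by (auto simp: invariant_imag_units_def)
    then have "I ` W \<subseteq> W \<and> J ` W \<subseteq> W \<and> K ` W \<subseteq> W"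
      using quaternion_invariant_if_two_imag_units_invariant[OF qa W u(1) _ uv u(2)] by blast
    with not_quaternionic show False ..
  qed
  then have "invariant_imag_units I J K W \<subseteq> {(u1, u2, u3), (-u1, -u2, -u3)}"
    by auto
  then show ?thesis
    by (rule finite_subset) simp
qed

lemma full_lattice_countable:
  assumes "full_lattice W \<Gamma>"
  shows "countable \<Gamma>"
proof -
  obtain B where B: "finite B"
    and \<Gamma>: "\<Gamma> = {(\<Sum>b\<in>B. c b *\<^sub>R b) | c. \<forall>b\<in>B. c b \<in> \<int>}"
    using assms unfolding full_lattice_def by blast
  have "\<Gamma> \<subseteq> (\<lambda>c. \<Sum>b\<in>B. c b *\<^sub>R b) ` (B \<rightarrow>\<^sub>E \<int>)"
  proof
    fix x
    assume "x \<in> \<Gamma>"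
    then obtain c where c: "\<forall>b\<in>B. c b \<in> \<int>" and x: "x = (\<Sum>b\<in>B. c b *\<^sub>R b)"
      using \<Gamma> by blast
    have "x = (\<Sum>b\<in>B. restrict c B b *\<^sub>R b)"
      using x by simp
    moreover have "restrict c B \<in> B \<rightarrow>\<^sub>E \<int>"
      using c by simp
    ultimately show "x \<in> (\<lambda>c. \<Sum>b\<in>B. c b *\<^sub>R b) ` (B \<rightarrow>\<^sub>E \<int>)"
      by blast
  qed
  moreover have "countable (B \<rightarrow>\<^sub>E (\<int> :: real set))"
    using B countable_int by (rule countable_PiE)
  ultimately show ?thesis
    by (meson countable_image countable_subset)
qed

lemma rational_subspace_span_lattice_points:
  assumes "rational_subspace \<Lambda> W"
  obtains B where "finite B" "B \<subseteq> \<Lambda>" "W = span B"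
proof -
  obtain B where B: "finite B" "span B = W"
    and \<Lambda>W: "\<Lambda> \<inter> W = {(\<Sum>b\<in>B. c b *\<^sub>R b) | c. \<forall>b\<in>B. c b \<in> \<int>}"
    using assms unfolding rational_subspace_def full_lattice_def by blast
  have "b \<in> \<Lambda> \<inter> W" if b: "b \<in> B" for b
  proof -
    have "(\<Sum>b'\<in>B. (if b' = b then 1 else 0) *\<^sub>R b') = (\<Sum>b'\<in>B. if b' = b then b' else 0)"
      by (intro sum.cong) auto
    also have "\<dots> = b"
      using B(1) b by simp
    finally have "(\<Sum>b'\<in>B. (if b' = b then 1 else 0) *\<^sub>R b') = b" .
    then show ?thesis
      unfolding \<Lambda>W by (intro CollectI exI[of _ "\<lambda>b'. if b' = b then 1 else 0"]) auto
  qed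
  then show thesis
    using that B by blast
qed

lemma countable_rational_subspaces:
  assumes "countable \<Lambda>"
  shows "countable {W. rational_subspace \<Lambda> W}"
proof -
  have "{W. rational_subspace \<Lambda> W} \<subseteq> span ` {B. finite B \<and> B \<subseteq> \<Lambda>}"
    by (blast elim: rational_subspace_span_lattice_points)
  moreover have "countable {B. finite B \<and> B \<subseteq> \<Lambda>}"
    using assms by (rule countable_Collect_finite_subset)
  ultimately show ?thesis
    by (meson countable_image countable_subset)
qed

theorem lemma3p3:
  fixes I J K :: "'v::euclidean_space \<Rightarrow> 'v" and \<Lambda> :: "'v set"
  assumes "quaternion_action I J K"
    and "full_lattice UNIV \<Lambda>"
  shows "\<exists>E :: (real \<times> real \<times> real) set. countable E \<and>
           (\<forall>a b c. a\<^sup>2 + b\<^sup>2 + c\<^sup>2 = 1 \<and> (a, b, c) \<notin> E \<longrightarrow>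
              (\<forall>W. rational_subspace \<Lambda> W \<and>
                   (\<lambda>v. a *\<^sub>R I v + b *\<^sub>R J v + c *\<^sub>R K v) ` W \<subseteq> W \<longrightarrow>
                   I ` W \<subseteq> W \<and> J ` W \<subseteq> W \<and> K ` W \<subseteq> W))"
proof -
  define R where "R = {W. rational_subspace \<Lambda> W \<and> \<not> (I ` W \<subseteq> W \<and> J ` W \<subseteq> W \<and> K ` W \<subseteq> W)}"
  define E where "E = \<Union> (invariant_imag_units I J K ` R)"
  have "R \<subseteq> {W. rational_subspace \<Lambda> W}"
    by (auto simp: R_def)
  then have "countable R"
    using countable_rational_subspaces[OF full_lattice_countable[OF assms(2)]]
    by (rule countable_subset)
  moreover have "finite (invariant_imag_units I J K W)" if "W \<in> R" for W
    using finite_invariant_imag_units[OF assms(1)] that by (simp add: R_def rational_subspace_def)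
  ultimately have "countable E"
    unfolding E_def by (simp add: countable_finite)
  show ?thesis
  proof (intro exI[of _ E] conjI[OF \<open>countable E\<close>] allI impI)
    fix a b c W
    assume abc: "a\<^sup>2 + b\<^sup>2 + c\<^sup>2 = 1 \<and> (a, b, c) \<notin> E"
      and W: "rational_subspace \<Lambda> W \<and> (\<lambda>v. a *\<^sub>R I v + b *\<^sub>R J v + c *\<^sub>R K v) ` W \<subseteq> W"
    have "imag_quat_op I J K a b c = (\<lambda>v. a *\<^sub>R I v + b *\<^sub>R J v + c *\<^sub>R K v)"
      by (simp add: fun_eq_iff imag_quat_op_def)
    with abc W have "(a, b, c) \<in> invariant_imag_units I J K W"
      by (simp add: invariant_imag_units_def)
    with abc have "W \<notin> R"
      by (auto simp: E_def)
    with W show "I ` W \<subseteq> W \<and> J ` W \<subseteq> W \<and> K ` W \<subseteq> W"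
      by (simp add: R_def)
  qed
qed

end
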